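(* Let $M,N\ge1$, $\mathbf y\in\mathbb{R}^M$, $\mathbf H\in\mathbb{R}^{M\times N}$ with $R=\operatorname{rank}(\mathbf H)\ge1$, and $\sigma_e^2>0$, $\sigma_\epsilon^2>0$. Let $\mathbf H=\mathbf U\boldsymbol\Sigma\mathbf V^{\mathrm T}$ be a singular value decomposition with nonzero singular values $\lambda_1\ge\cdots\ge\lambda_R>0$, and $\widetilde{\mathbf y}=\mathbf U^{\mathrm T}\mathbf y$. Consider the negative log-likelihood $$f(\mathbf x)=\frac{\|\mathbf y-\mathbf H\mathbf x\|_2^2}{2(\sigma_e^2\|\mathbf x\|_2^2+\sigma_\epsilon^2)}+\frac M2\log(\sigma_e^2\|\mathbf x\|_2^2+\sigma_\epsilon^2),\qquad \mathbf x\in\mathbb{R}^N,$$ and the optimization problem (P): minimize over $\mathbf w=(w_1,\dots,w_N)\in\mathbb{R}^N$ and $z>0$ $$\Phi(\mathbf w,z)=\sum_{j=1}^R\frac12\Big(\widetilde y_j^2 z+\lambda_j^2w_j-2|\widetilde y_j|\lambda_j\sqrt{w_jz}\Big)+\frac12\|\widetilde{\mathbf y}_{R+1:M}\|_2^2\,z-\frac M2\log z$$ subject to $\sigma_e^2\sum_{i=1}^N w_i+\sigma_\epsilon^2 z=1$ and $w_i\ge0$ for $i=1,\dots,N$. Then: (i) $\Phi$ is a convex function on $\{(\mathbf w,z):\mathbf w\ge\mathbf 0,\ z>0\}$, so (P) is a convex optimization problem; (ii) $\inf_{\mathbf x\in\mathbb{R}^N}f(\mathbf x)$ equals the optimal value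 of (P); (iii) strong duality holds for (P), i.e. the optimal value of (P) equals the optimal value of its Lagrangian dual problem (with multipliers for the equality constraint and the constraints $w_i\ge0$).
   Context: $\widetilde{\mathbf y}_{R+1:M}=(\widetilde y_{R+1},\dots,\widetilde y_M)^{\mathrm T}$; if $R=M$ it is empty and its squared norm is $0$. The function $f$ is, up to additive constants, the negative log-likelihood of $\mathbf x$ in the model $\mathbf y=(\mathbf H+\mathbf E)\mathbf x+\boldsymbol\epsilon$ with $\mathbf E$ having i.i.d. $\mathcal N(0,\sigma_e^2)$ entries and $\boldsymbol\epsilon\sim\mathcal N(\mathbf 0,\sigma_\epsilon^2\mathbf I_M)$ independent. *)

theory Defs
  imports "Jordan_Normal_Form.DL_Rank" "HOL-Library.Extended_Real"
begin

definition sqnorm :: "real vec \<Rightarrow> real" where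
  "sqnorm x = x \<bullet> x"

definition orth_mat :: "nat \<Rightarrow> real mat \<Rightarrow> bool" where
  "orth_mat n Q \<longleftrightarrow> Q \<in> carrier_mat n n \<and> transpose_mat Q * Q = 1\<^sub>m n"

text \<open>Singular value decomposition H = U Sigma V^T of an M x N matrix, with exactly R nonzero
  singular values lam 0 >= ... >= lam (R-1) > 0 (0-based indices).\<close>
definition is_svd :: "nat \<Rightarrow> nat \<Rightarrow> real mat \<Rightarrow> real mat \<Rightarrow> real mat \<Rightarrow> nat \<Rightarrow> (nat \<Rightarrow> real) \<Rightarrow> bool" where
  "is_svd M N H U V R lam \<longleftrightarrow>
     orth_mat M U \<and> orth_mat N V \<and>
     (\<forall>j<R. lam j > 0) \<and> (\<forall>i j. i \<le> j \<and> j < R \<longrightarrow> lam j \<le> lam i) \<and>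
     H = U * mat M N (\<lambda>(i, j). if i = j \<and> i < R then lam i else 0) * transpose_mat V"

definition nll :: "nat \<Rightarrow> real vec \<Rightarrow> real mat \<Rightarrow> real \<Rightarrow> real \<Rightarrow> real vec \<Rightarrow> real" where
  "nll M y H se2 sep2 x =
     sqnorm (y - H *\<^sub>v x) / (2 * (se2 * sqnorm x + sep2))
     + real M / 2 * ln (se2 * sqnorm x + sep2)"

text \<open>Objective Phi of problem (P); yt = U^T y; indices 0-based (j = 0..R-1).\<close>
definition Phi :: "nat \<Rightarrow> nat \<Rightarrow> real vec \<Rightarrow> (nat \<Rightarrow> real) \<Rightarrow> real vec \<Rightarrow> real \<Rightarrow> real" where
  "Phi M R yt lam w z =
     (\<Sum>j<R. (yt $ j ^ 2 * z + lam j ^ 2 * w $ j - 2 * \<bar>yt $ j\<bar> * lam j * sqrt (w $ j * z)) / 2)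
     + (\<Sum>j\<in>{R..<M}. yt $ j ^ 2) / 2 * z - real M / 2 * ln z"

definition dom_P :: "nat \<Rightarrow> (real vec \<times> real) set" where
  "dom_P N = {(w, z). w \<in> carrier_vec N \<and> (\<forall>i<N. w $ i \<ge> 0) \<and> z > 0}"

definition feas_P :: "nat \<Rightarrow> real \<Rightarrow> real \<Rightarrow> (real vec \<times> real) set" where
  "feas_P N se2 sep2 = {(w, z). (w, z) \<in> dom_P N \<and> se2 * (\<Sum>i<N. w $ i) + sep2 * z = 1}"

text \<open>Lagrangian with multiplier nu for the equality constraint and mu_i >= 0 for the
  constraints w_i >= 0 (written as -w_i <= 0).\<close>
definition lagr_P :: "nat \<Rightarrow> nat \<Rightarrow> nat \<Rightarrow> real \<Rightarrow> real \<Rightarrow> real vec \<Rightarrow> (nat \<Rightarrow> real) \<Rightarrow>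
     real vec \<Rightarrow> real \<Rightarrow> real \<Rightarrow> real vec \<Rightarrow> real" where
  "lagr_P M N R se2 sep2 yt lam w z nu mu =
     Phi M R yt lam w z + nu * (se2 * (\<Sum>i<N. w $ i) + sep2 * z - 1) - (\<Sum>i<N. mu $ i * w $ i)"

definition primal_val :: "nat \<Rightarrow> nat \<Rightarrow> nat \<Rightarrow> real \<Rightarrow> real \<Rightarrow> real vec \<Rightarrow> (nat \<Rightarrow> real) \<Rightarrow> ereal" where
  "primal_val M N R se2 sep2 yt lam = (INF p\<in>feas_P N se2 sep2. ereal (Phi M R yt lam (fst p) (snd p)))"

definition dual_fun :: "nat \<Rightarrow> nat \<Rightarrow> nat \<Rightarrow> real \<Rightarrow> real \<Rightarrow> real vec \<Rightarrow> (nat \<Rightarrow> real) \<Rightarrow>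
     real \<Rightarrow> real vec \<Rightarrow> ereal" where
  "dual_fun M N R se2 sep2 yt lam nu mu =
     (INF p\<in>dom_P N. ereal (lagr_P M N R se2 sep2 yt lam (fst p) (snd p) nu mu))"

definition dual_val :: "nat \<Rightarrow> nat \<Rightarrow> nat \<Rightarrow> real \<Rightarrow> real \<Rightarrow> real vec \<Rightarrow> (nat \<Rightarrow> real) \<Rightarrow> ereal" where
  "dual_val M N R se2 sep2 yt lam =
     (SUP d\<in>{(nu, mu). mu \<in> carrier_vec N \<and> (\<forall>i<N. mu $ i \<ge> 0)}.
        dual_fun M N R se2 sep2 yt lam (fst d) (snd d))"

end

theory Submission
  imports Defs "HOL-Analysis.Convex"
begin

text \<open>In the coordinates \<open>x' = V\<^sup>T x\<close>, \<open>y' = U\<^sup>T y\<close> the residual splits along the singular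
  directions. Writing \<open>s = \<sigma>\<^sub>e\<^sup>2 \<parallel>x\<parallel>\<^sup>2 + \<sigma>\<^sub>\<epsilon>\<^sup>2\<close>, the substitution \<open>w\<^sub>i = x'\<^sub>i\<^sup>2 / s\<close>, \<open>z = 1 / s\<close> maps
  every \<open>x\<close> to a feasible point of (P) with \<open>\<Phi>(w, z) \<le> f(x)\<close>; conversely every feasible point
  arises this way with equality once the sign of \<open>x'\<^sub>j\<close> is that of \<open>y'\<^sub>j\<close>. So the infima agree.
  \<open>\<Phi>\<close> is convex because \<open>\<surd>(w z)\<close> and \<open>log z\<close> are concave. For strong duality, the
  perturbation function \<open>c \<mapsto> inf {\<Phi>(w, z) | \<sigma>\<^sub>e\<^sup>2 \<Sigma> w + \<sigma>\<^sub>\<epsilon>\<^sup>2 z = c}\<close> is convex and finite on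
  \<open>(0, \<infinity>)\<close>, hence has a supporting line at \<open>c = 1\<close>; its slope yields a multiplier for the
  equality constraint, with zero multipliers for \<open>w \<ge> 0\<close>.\<close>

lemma (in vec_space) rank_le_nr:
  assumes "A \<in> carrier_mat n nc"
  shows "rank A \<le> n"
proof -
  obtain S where S: "maximal S (\<lambda>T. T \<subseteq> set (cols A) \<and> lin_indpt T)"
    using maximal_exists[of "\<lambda>T. T \<subseteq> set (cols A) \<and> lin_indpt T" "card (set (cols A))" "{}"]
    by (meson List.finite_set card_mono empty_iff empty_subsetI finite_lin_indpt2 rev_finite_subset)
  then have "S \<subseteq> set (cols A)" "lin_indpt S"
    unfolding maximal_def by auto
  moreover have "set (cols A) \<subseteq> carrier_vec n"
    using cols_dim assms by blast
  ultimately have "card S \<le> dim"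
    using li_le_dim(2)[OF fin_dim] by auto
  then show ?thesis
    using rank_card_indpt[OF assms S] dim_is_n by simp
qed

lemma orth_mat_carrier: "orth_mat n Q \<Longrightarrow> Q \<in> carrier_mat n n"
  unfolding orth_mat_def by simp

lemma orth_mat_right_inverse: "orth_mat n Q \<Longrightarrow> Q * transpose_mat Q = 1\<^sub>m n"
  unfolding orth_mat_def using mat_mult_left_right_inverse[of "transpose_mat Q" n Q] by auto

lemma orth_mat_transpose: "orth_mat n Q \<Longrightarrow> orth_mat n (transpose_mat Q)"
  using orth_mat_right_inverse unfolding orth_mat_def by auto

lemma orth_mat_cancel_left:
  assumes "orth_mat n Q" and "v \<in> carrier_vec n"
  shows "transpose_mat Q *\<^sub>v (Q *\<^sub>v v) = v"
proof -
  have "transpose_mat Q *\<^sub>v (Q *\<^sub>v v) = (transpose_mat Q * Q) *\<^sub>v v"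
    using assms orth_mat_carrier by (metis assoc_mult_mat_vec transpose_carrier_mat)
  then show ?thesis
    using assms unfolding orth_mat_def by simp
qed

lemma sqnorm_orth_mat_mult_vec:
  assumes "orth_mat n Q" and v: "v \<in> carrier_vec n"
  shows "sqnorm (Q *\<^sub>v v) = sqnorm v"
proof -
  have Q: "Q \<in> carrier_mat n n"
    using assms(1) by (rule orth_mat_carrier)
  have "sqnorm (Q *\<^sub>v v) = scalar_prod (transpose_mat Q *\<^sub>v (Q *\<^sub>v v)) v"
    unfolding sqnorm_def using transpose_vec_mult_scalar[OF Q v, of "Q *\<^sub>v v"] Q v by simp
  then show ?thesis
    unfolding sqnorm_def orth_mat_cancel_left[OF assms] .
qed

lemma sqnorm_eq_sum_squares: "v \<in> carrier_vec n \<Longrightarrow> sqnorm v = (\<Sum>i<n. (v $ i)\<^sup>2)"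
  unfolding sqnorm_def scalar_prod_def by (simp add: power2_eq_square atLeast0LessThan)

lemma sqnorm_nonneg: "0 \<le> sqnorm (v :: real vec)"
  unfolding sqnorm_def scalar_prod_def by (auto intro: sum_nonneg)

lemma sqnorm_minus_diag_mult_vec:
  fixes lam :: "nat \<Rightarrow> real"
  assumes "R \<le> M" "R \<le> N" and yt: "yt \<in> carrier_vec M" and xt: "xt \<in> carrier_vec N"
  shows "sqnorm (yt - mat M N (\<lambda>(i, j). if i = j \<and> i < R then lam i else 0) *\<^sub>v xt)
     = (\<Sum>j<R. (yt $ j - lam j * xt $ j)\<^sup>2) + (\<Sum>j\<in>{R..<M}. (yt $ j)\<^sup>2)"
proof -
  let ?S = "mat M N (\<lambda>(i, j). if i = j \<and> i < R then lam i else 0)"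
  have split_sum: "(\<Sum>i<M. g i) = (\<Sum>i<R. g i) + (\<Sum>i\<in>{R..<M}. g i)" for g :: "nat \<Rightarrow> real"
    using sum.atLeastLessThan_concat[of 0 R M g] assms(1) by (simp add: atLeast0LessThan)
  have Sx: "(?S *\<^sub>v xt) $ i = (if i < R then lam i * xt $ i else 0)" if "i < M" for i
    using that xt assms
    by (simp add: row_def scalar_prod_def atLeast0LessThan if_distrib[of "\<lambda>c. c * _"] cong: if_cong)
  have "sqnorm (yt - ?S *\<^sub>v xt) = (\<Sum>i<M. ((yt - ?S *\<^sub>v xt) $ i)\<^sup>2)"
    by (rule sqnorm_eq_sum_squares) (intro carrier_vecI, simp)
  also have "\<dots> = (\<Sum>i<M. (if i < R then (yt $ i - lam i * xt $ i)\<^sup>2 else (yt $ i)\<^sup>2))"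
    using yt Sx by (intro sum.cong) auto
  also have "\<dots> = (\<Sum>j<R. (yt $ j - lam j * xt $ j)\<^sup>2) + (\<Sum>j\<in>{R..<M}. (yt $ j)\<^sup>2)"
    unfolding split_sum by (intro arg_cong2[where f = "(+)"] sum.cong) auto
  finally show ?thesis .
qed

definition rotated_nll :: "nat \<Rightarrow> nat \<Rightarrow> real vec \<Rightarrow> (nat \<Rightarrow> real) \<Rightarrow> real \<Rightarrow> real \<Rightarrow> real vec \<Rightarrow> real" where
  "rotated_nll M R yt lam se2 sep2 xt =
     ((\<Sum>j<R. (yt $ j - lam j * xt $ j)\<^sup>2) + (\<Sum>j\<in>{R..<M}. (yt $ j)\<^sup>2)) / (2 * (se2 * sqnorm xt + sep2))
     + real M / 2 * ln (se2 * sqnorm xt + sep2)"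

lemma nll_eq_rotated_nll:
  assumes svd: "is_svd M N H U V R lam" and "R \<le> M" "R \<le> N"
    and y: "y \<in> carrier_vec M" and x: "x \<in> carrier_vec N"
  shows "nll M y H se2 sep2 x
    = rotated_nll M R (transpose_mat U *\<^sub>v y) lam se2 sep2 (transpose_mat V *\<^sub>v x)"
proof -
  define S where "S = mat M N (\<lambda>(i, j). if i = j \<and> i < R then lam i else 0)"
  define yt where "yt = transpose_mat U *\<^sub>v y"
  define xt where "xt = transpose_mat V *\<^sub>v x"
  have oU: "orth_mat M U" and oV: "orth_mat N V" and H: "H = U * S * transpose_mat V"
    using svd unfolding is_svd_def S_def by auto
  have U: "U \<in> carrier_mat M M" and V: "V \<in> carrier_mat N N" and S: "S \<in> carrier_mat M N"
    using oU oV orth_mat_carrier unfolding S_def by auto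
  have yt: "yt \<in> carrier_vec M" and xt: "xt \<in> carrier_vec N"
    unfolding yt_def xt_def using U V y x by auto
  have "H *\<^sub>v x = (U * S) *\<^sub>v xt"
    unfolding H xt_def using U S V x by (intro assoc_mult_mat_vec) auto
  also have "\<dots> = U *\<^sub>v (S *\<^sub>v xt)"
    using U S xt by (intro assoc_mult_mat_vec) auto
  finally have Hx: "H *\<^sub>v x = U *\<^sub>v (S *\<^sub>v xt)" .
  have "y = U *\<^sub>v yt"
    using orth_mat_cancel_left[OF orth_mat_transpose[OF oU] y] by (simp add: yt_def)
  with Hx have "y - H *\<^sub>v x = U *\<^sub>v (yt - S *\<^sub>v xt)"
    using U S yt xt by (simp add: mult_minus_distrib_mat_vec)
  then have "sqnorm (y - H *\<^sub>v x) = sqnorm (yt - S *\<^sub>v xt)"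
    using sqnorm_orth_mat_mult_vec[OF oU] S yt xt by simp
  moreover have "sqnorm x = sqnorm xt"
    unfolding xt_def using sqnorm_orth_mat_mult_vec[OF orth_mat_transpose[OF oV] x] by simp
  ultimately show ?thesis
    unfolding nll_def rotated_nll_def yt_def[symmetric] xt_def[symmetric] S_def
    using sqnorm_minus_diag_mult_vec[OF assms(2,3) yt xt] by simp
qed

lemma sqrt_mult_concave:
  fixes w1 z1 w2 z2 t :: real
  assumes "0 \<le> w1" "0 \<le> z1" "0 \<le> w2" "0 \<le> z2" "0 \<le> t" "t \<le> 1"
  shows "t * sqrt (w1 * z1) + (1 - t) * sqrt (w2 * z2)
    \<le> sqrt ((t * w1 + (1 - t) * w2) * (t * z1 + (1 - t) * z2))"
proof -
  obtain a1 a2 b1 b2 where w: "w1 = a1\<^sup>2" "w2 = a2\<^sup>2" and z: "z1 = b1\<^sup>2" "z2 = b2\<^sup>2"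
    and "0 \<le> a1" "0 \<le> a2" "0 \<le> b1" "0 \<le> b2"
    using assms real_sqrt_pow2 real_sqrt_ge_zero by metis
  then have sqrt_eq: "sqrt (w1 * z1) = a1 * b1" "sqrt (w2 * z2) = a2 * b2"
    by (simp_all add: real_sqrt_mult)
  have "(t * w1 + (1 - t) * w2) * (t * z1 + (1 - t) * z2) - (t * (a1 * b1) + (1 - t) * (a2 * b2))\<^sup>2
      = t * (1 - t) * (a1 * b2 - a2 * b1)\<^sup>2"
    unfolding w z by (simp add: power2_eq_square algebra_simps)
  also have "\<dots> \<ge> 0"
    using assms by simp
  finally show ?thesis
    unfolding sqrt_eq by (intro real_le_rsqrt) simp
qed

lemma Phi_convex:
  assumes "R \<le> N" and lam: "\<And>j. j < R \<Longrightarrow> 0 \<le> lam j"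
    and p: "p \<in> dom_P N" and q: "q \<in> dom_P N" and t: "0 \<le> t" "t \<le> 1"
  shows "Phi M R yt lam (t \<cdot>\<^sub>v fst p + (1 - t) \<cdot>\<^sub>v fst q) (t * snd p + (1 - t) * snd q)
    \<le> t * Phi M R yt lam (fst p) (snd p) + (1 - t) * Phi M R yt lam (fst q) (snd q)"
proof -
  obtain w1 z1 w2 z2 where pq: "p = (w1, z1)" "q = (w2, z2)"
    by fastforce
  have w1: "w1 \<in> carrier_vec N" "\<And>i. i < N \<Longrightarrow> 0 \<le> w1 $ i" and "0 < z1"
    and w2: "w2 \<in> carrier_vec N" "\<And>i. i < N \<Longrightarrow> 0 \<le> w2 $ i" and "0 < z2"
    using p q unfolding pq dom_P_def by auto
  define w where "w = t \<cdot>\<^sub>v w1 + (1 - t) \<cdot>\<^sub>v w2"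
  define z where "z = t * z1 + (1 - t) * z2"
  let ?g = "\<lambda>w z j. (yt $ j ^ 2 * z + lam j ^ 2 * w $ j - 2 * \<bar>yt $ j\<bar> * lam j * sqrt (w $ j * z)) / 2"
  have summand: "?g w z j \<le> t * ?g w1 z1 j + (1 - t) * ?g w2 z2 j" if j: "j < R" for j
  proof -
    have wj: "w $ j = t * w1 $ j + (1 - t) * w2 $ j"
      using j assms(1) w1 w2 by (simp add: w_def)
    define s where "s = sqrt (w $ j * z)"
    have "t * sqrt (w1 $ j * z1) + (1 - t) * sqrt (w2 $ j * z2) \<le> s"
      unfolding s_def wj z_def using j assms(1) w1 w2 \<open>0 < z1\<close> \<open>0 < z2\<close> t
      by (intro sqrt_mult_concave) auto
    then have "\<bar>yt $ j\<bar> * lam j * (t * sqrt (w1 $ j * z1) + (1 - t) * sqrt (w2 $ j * z2))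
        \<le> \<bar>yt $ j\<bar> * lam j * s"
      using lam[OF j] by (intro mult_left_mono) auto
    then show ?thesis
      unfolding s_def[symmetric] unfolding wj z_def by (simp add: field_simps)
  qed
  let ?A = "\<lambda>w z. \<Sum>j<R. ?g w z j" and ?T = "\<lambda>z. (\<Sum>j\<in>{R..<M}. (yt $ j)\<^sup>2) / 2 * z"
    and ?L = "\<lambda>z. real M / 2 * ln z"
  have "?A w z \<le> t * ?A w1 z1 + (1 - t) * ?A w2 z2"
    using sum_mono[of "{..<R}", OF summand] by (simp add: sum.distrib sum_distrib_left)
  moreover have "?T z = t * ?T z1 + (1 - t) * ?T z2"
    by (simp add: z_def field_simps)
  moreover have "t * ln z1 + (1 - t) * ln z2 \<le> ln z"
    using concave_onD[OF ln_concave, of "1 - t" z1 z2] t \<open>0 < z1\<close> \<open>0 < z2\<close> by (simp add: z_def)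
  then have "t * ?L z1 + (1 - t) * ?L z2 \<le> ?L z"
    unfolding mult.left_commute[of t] mult.left_commute[of "1 - t"] distrib_left[symmetric]
    by (intro mult_left_mono) auto
  ultimately have "?A w z + ?T z - ?L z
      \<le> t * (?A w1 z1 + ?T z1 - ?L z1) + (1 - t) * (?A w2 z2 + ?T z2 - ?L z2)"
    unfolding distrib_left right_diff_distrib by linarith
  then show ?thesis
    unfolding pq Phi_def fst_conv snd_conv w_def[symmetric] z_def[symmetric] .
qed

lemma Phi_ge_neg_ln:
  assumes "R \<le> N" and "(w, z) \<in> dom_P N"
  shows "- real M / 2 * ln z \<le> Phi M R yt lam w z"
proof -
  have w: "\<And>i. i < N \<Longrightarrow> 0 \<le> w $ i" and z: "0 < z"
    using assms(2) unfolding dom_P_def by auto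
  have "yt $ j ^ 2 * z + lam j ^ 2 * w $ j - 2 * \<bar>yt $ j\<bar> * lam j * sqrt (w $ j * z)
      = (\<bar>yt $ j\<bar> * sqrt z - lam j * sqrt (w $ j))\<^sup>2" if "j < R" for j
    using that assms(1) w[of j] z by (simp add: power2_eq_square algebra_simps real_sqrt_mult)
  then have "0 \<le> (\<Sum>j<R. (yt $ j ^ 2 * z + lam j ^ 2 * w $ j - 2 * \<bar>yt $ j\<bar> * lam j * sqrt (w $ j * z)) / 2)"
    by (intro sum_nonneg) simp
  moreover have "0 \<le> (\<Sum>j\<in>{R..<M}. (yt $ j)\<^sup>2) / 2 * z"
    using z by (simp add: sum_nonneg)
  ultimately show ?thesis
    unfolding Phi_def by linarith
qed

lemma Phi_le_rotated_nll:
  assumes "R \<le> N" and lam: "\<And>j. j < R \<Longrightarrow> 0 \<le> lam j" and "0 < se2" "0 < sep2"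
    and xt: "xt \<in> carrier_vec N"
  shows "\<exists>p\<in>feas_P N se2 sep2. Phi M R yt lam (fst p) (snd p) \<le> rotated_nll M R yt lam se2 sep2 xt"
proof -
  define s where "s = se2 * sqnorm xt + sep2"
  have s: "0 < s"
    unfolding s_def using assms(3,4) sqnorm_nonneg[of xt] by (simp add: add_nonneg_pos)
  define w where "w = vec N (\<lambda>i. (xt $ i)\<^sup>2 / s)"
  define z where "z = 1 / s"
  have wi: "w $ i = (xt $ i)\<^sup>2 / s" if "i < N" for i
    using that by (simp add: w_def)
  have "(\<Sum>i<N. w $ i) = sqnorm xt / s"
    by (simp add: sqnorm_eq_sum_squares[OF xt] wi sum_divide_distrib)
  then have "se2 * (\<Sum>i<N. w $ i) + sep2 * z = 1"
    using s by (simp add: z_def s_def add_divide_distrib[symmetric])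
  then have feasible: "(w, z) \<in> feas_P N se2 sep2"
    using s unfolding feas_P_def dom_P_def by (auto simp: w_def z_def)
  have summand: "(yt $ j ^ 2 * z + lam j ^ 2 * w $ j - 2 * \<bar>yt $ j\<bar> * lam j * sqrt (w $ j * z)) / 2
      \<le> (yt $ j - lam j * xt $ j)\<^sup>2 / (2 * s)" if j: "j < R" for j
  proof -
    have sqrt_wz: "sqrt (w $ j * z) = \<bar>xt $ j\<bar> / s"
      using j assms(1) s by (simp add: wi z_def real_sqrt_divide power2_eq_square)
    have "yt $ j * lam j * xt $ j \<le> \<bar>yt $ j\<bar> * lam j * \<bar>xt $ j\<bar>"
      using lam[OF j] abs_ge_self[of "yt $ j * lam j * xt $ j"] by (simp add: abs_mult)
    then show ?thesis
      unfolding sqrt_wz using j assms(1) s by (simp add: wi z_def field_simps power2_eq_square)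
  qed
  have "Phi M R yt lam w z
      = (\<Sum>j<R. (yt $ j ^ 2 * z + lam j ^ 2 * w $ j - 2 * \<bar>yt $ j\<bar> * lam j * sqrt (w $ j * z)) / 2)
        + (\<Sum>j\<in>{R..<M}. (yt $ j)\<^sup>2) / (2 * s) + real M / 2 * ln s"
    unfolding Phi_def z_def using s by (simp add: ln_div)
  also have "\<dots> \<le> (\<Sum>j<R. (yt $ j - lam j * xt $ j)\<^sup>2 / (2 * s))
        + (\<Sum>j\<in>{R..<M}. (yt $ j)\<^sup>2) / (2 * s) + real M / 2 * ln s"
    using summand by (intro add_mono order_refl sum_mono) auto
  also have "\<dots> = rotated_nll M R yt lam se2 sep2 xt"
    unfolding rotated_nll_def s_def[symmetric] by (simp add: sum_divide_distrib add_divide_distrib)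
  finally show ?thesis
    using feasible by force
qed

lemma rotated_nll_eq_Phi:
  assumes "R \<le> N" and p: "p \<in> feas_P N se2 sep2"
  shows "\<exists>xt\<in>carrier_vec N. rotated_nll M R yt lam se2 sep2 xt = Phi M R yt lam (fst p) (snd p)"
proof -
  obtain w z where p_eq: "p = (w, z)"
    by fastforce
  have w: "\<And>i. i < N \<Longrightarrow> 0 \<le> w $ i" and z: "0 < z"
    and constraint: "se2 * (\<Sum>i<N. w $ i) + sep2 * z = 1"
    using p unfolding p_eq feas_P_def dom_P_def by auto
  define xt where "xt = vec N (\<lambda>i. (if yt $ i < 0 then -1 else 1) * sqrt (w $ i / z))"
  have xt: "xt \<in> carrier_vec N"
    by (simp add: xt_def)
  have xt_sq: "(xt $ i)\<^sup>2 = w $ i / z" if "i < N" for i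
    using that w[OF that] z by (simp add: xt_def power_mult_distrib)
  have "sqnorm xt = (\<Sum>i<N. w $ i) / z"
    by (simp add: sqnorm_eq_sum_squares[OF xt] xt_sq sum_divide_distrib)
  then have s: "se2 * sqnorm xt + sep2 = 1 / z"
    using z constraint by (simp add: field_simps)
  have summand: "(yt $ j - lam j * xt $ j)\<^sup>2 * z
      = yt $ j ^ 2 * z + lam j ^ 2 * w $ j - 2 * \<bar>yt $ j\<bar> * lam j * sqrt (w $ j * z)" if j: "j < R" for j
  proof -
    have "sqrt (w $ j / z) * z = sqrt (w $ j * z)"
      using w[of j] z j assms(1) by (simp add: real_sqrt_divide real_sqrt_mult field_simps)
    then have "yt $ j * xt $ j * z = \<bar>yt $ j\<bar> * sqrt (w $ j * z)"
      using j assms(1) by (auto simp: xt_def)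
    then show ?thesis
      using j assms(1) z by (simp add: power2_eq_square algebra_simps xt_sq[unfolded power2_eq_square])
  qed
  have "rotated_nll M R yt lam se2 sep2 xt
      = (\<Sum>j<R. (yt $ j - lam j * xt $ j)\<^sup>2 * z) / 2 + (\<Sum>j\<in>{R..<M}. (yt $ j)\<^sup>2) / 2 * z - real M / 2 * ln z"
    unfolding rotated_nll_def s using z by (simp add: ln_div sum_distrib_left field_simps)
  also have "\<dots> = Phi M R yt lam w z"
    unfolding Phi_def using summand by (simp add: sum_divide_distrib)
  finally show ?thesis
    using xt p_eq by auto
qed

lemma INF_nll_eq_primal_val:
  assumes svd: "is_svd M N H U V R lam" and "R \<le> M" "R \<le> N" "0 < se2" "0 < sep2"
    and y: "y \<in> carrier_vec M"
  shows "(INF x\<in>carrier_vec N. ereal (nll M y H se2 sep2 x))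
    = primal_val M N R se2 sep2 (transpose_mat U *\<^sub>v y) lam"
proof -
  let ?yt = "transpose_mat U *\<^sub>v y"
  have oV: "orth_mat N V" and lam: "\<And>j. j < R \<Longrightarrow> 0 \<le> lam j"
    using svd unfolding is_svd_def by (auto intro: less_imp_le)
  have V: "V \<in> carrier_mat N N"
    using oV by (rule orth_mat_carrier)
  show ?thesis
    unfolding primal_val_def
  proof (rule INF_eq)
    fix x :: "real vec" assume x: "x \<in> carrier_vec N"
    then have "transpose_mat V *\<^sub>v x \<in> carrier_vec N"
      using V by simp
    then show "\<exists>p\<in>feas_P N se2 sep2. ereal (Phi M R ?yt lam (fst p) (snd p)) \<le> ereal (nll M y H se2 sep2 x)"
      using Phi_le_rotated_nll[OF assms(3) lam assms(4,5)] nll_eq_rotated_nll[OF svd assms(2,3) y x]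
      by simp
  next
    fix p assume "p \<in> feas_P N se2 sep2"
    then obtain xt where xt: "xt \<in> carrier_vec N"
      and "rotated_nll M R ?yt lam se2 sep2 xt = Phi M R ?yt lam (fst p) (snd p)"
      using rotated_nll_eq_Phi[OF assms(3)] by blast
    moreover have "V *\<^sub>v xt \<in> carrier_vec N"
      using V xt by simp
    ultimately show "\<exists>x\<in>carrier_vec N. ereal (nll M y H se2 sep2 x) \<le> ereal (Phi M R ?yt lam (fst p) (snd p))"
      using nll_eq_rotated_nll[OF svd assms(2,3) y] orth_mat_cancel_left[OF oV xt] by force
  qed
qed

lemma convex_on_supporting_line:
  fixes f :: "real \<Rightarrow> real"
  assumes f: "convex_on I f" and I: "l \<in> I" "x \<in> I" "r \<in> I" and "l < x" "x < r"
  shows "\<exists>s. \<forall>c\<in>I. f x + s * (c - x) \<le> f c"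
proof -
  define slope where "slope c = (f c - f x) / (c - x)" for c
  have slope_mono: "slope c \<le> slope d" if "c \<in> I" "c < x" "d \<in> I" "x < d" for c d
  proof -
    have "slope c \<le> (f c - f d) / (c - d)"
      using convex_on_slope_le(1)[OF f, of c d x] that I by (simp add: slope_def)
    also have "\<dots> \<le> (f x - f d) / (x - d)"
      using convex_on_slope_le(2)[OF f, of c d x] that I by simp
    also have "\<dots> = slope d"
      unfolding slope_def by (metis minus_diff_eq minus_divide_divide)
    finally show ?thesis .
  qed
  define s where "s = Sup (slope ` {c\<in>I. c < x})"
  have bdd: "bdd_above (slope ` {c\<in>I. c < x})"
    using slope_mono[of _ r] I \<open>x < r\<close> by (intro bdd_aboveI[of _ "slope r"]) auto
  have below: "slope c \<le> s" if "c \<in> I" "c < x" for c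
    unfolding s_def using bdd that by (intro cSup_upper) auto
  have above: "s \<le> slope d" if "d \<in> I" "x < d" for d
    unfolding s_def using I \<open>l < x\<close> that by (intro cSup_least) (auto intro: slope_mono)
  have "f x + s * (c - x) \<le> f c" if "c \<in> I" for c
  proof (cases c x rule: linorder_cases)
    case less
    then show ?thesis
      using below[OF that less] by (simp add: slope_def neg_divide_le_eq algebra_simps)
  next
    case greater
    then show ?thesis
      using above[OF that greater] by (simp add: slope_def le_divide_eq algebra_simps)
  qed simp
  then show ?thesis
    by blast
qed

locale convex_perturbation =
  fixes D :: "'p set" and comb :: "real \<Rightarrow> 'p \<Rightarrow> 'p \<Rightarrow> 'p" and F a :: "'p \<Rightarrow> real"
  assumes comb_mem: "\<And>p q t. p \<in> D \<Longrightarrow> q \<in> D \<Longrightarrow> 0 \<le> t \<Longrightarrow> t \<le> 1 \<Longrightarrow> comb t p q \<in> D"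
    and comb_affine: "\<And>p q t. p \<in> D \<Longrightarrow> q \<in> D \<Longrightarrow> 0 \<le> t \<Longrightarrow> t \<le> 1 \<Longrightarrow>
      a (comb t p q) = t * a p + (1 - t) * a q"
    and comb_convex: "\<And>p q t. p \<in> D \<Longrightarrow> q \<in> D \<Longrightarrow> 0 \<le> t \<Longrightarrow> t \<le> 1 \<Longrightarrow>
      F (comb t p q) \<le> t * F p + (1 - t) * F q"
    and constraint_pos: "\<And>p. p \<in> D \<Longrightarrow> 0 < a p"
    and level_nonempty: "\<And>c. 0 < c \<Longrightarrow> \<exists>p\<in>D. a p = c"
    and level_bdd_below: "\<And>c. 0 < c \<Longrightarrow> bdd_below (F ` {p\<in>D. a p = c})"
begin

definition perturbation :: "real \<Rightarrow> real" where
  "perturbation c = Inf (F ` {p\<in>D. a p = c})"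

lemma perturbation_le: "p \<in> D \<Longrightarrow> perturbation (a p) \<le> F p"
  unfolding perturbation_def using level_bdd_below[OF constraint_pos] by (intro cInf_lower) auto

lemma le_perturbation: "0 < c \<Longrightarrow> (\<And>p. p \<in> D \<Longrightarrow> a p = c \<Longrightarrow> k \<le> F p) \<Longrightarrow> k \<le> perturbation c"
  unfolding perturbation_def using level_nonempty by (intro cInf_greatest) auto

lemma convex_on_perturbation: "convex_on {0<..} perturbation"
proof (rule convex_onI)
  fix t x y :: real assume t: "0 < t" "t < 1" and xy: "x \<in> {0<..}" "y \<in> {0<..}"
  define c where "c = (1 - t) * x + t * y"
  have "0 < c"
    using t xy unfolding c_def by (auto intro: add_pos_pos)
  have "(perturbation c - t * F q) / (1 - t) \<le> F p"
    if "p \<in> D" "a p = x" "q \<in> D" "a q = y" for p q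
  proof -
    have "perturbation c \<le> F (comb (1 - t) p q)"
      using perturbation_le[OF comb_mem[of p q "1 - t"]] comb_affine[of p q "1 - t"] that t
      by (simp add: c_def)
    also have "\<dots> \<le> (1 - t) * F p + t * F q"
      using comb_convex[of p q "1 - t"] that t by simp
    finally show ?thesis
      using t by (simp add: field_simps)
  qed
  then have "(perturbation c - t * F q) / (1 - t) \<le> perturbation x" if "q \<in> D" "a q = y" for q
    using xy that by (intro le_perturbation) auto
  then have "(perturbation c - (1 - t) * perturbation x) / t \<le> perturbation y"
    using xy t by (intro le_perturbation) (auto simp: field_simps)
  then show "perturbation ((1 - t) *\<^sub>R x + t *\<^sub>R y) \<le> (1 - t) * perturbation x + t * perturbation y"
    using t by (simp add: c_def field_simps)
qed simp

lemma lagrange_multiplier: "\<exists>\<nu>. \<forall>p\<in>D. perturbation 1 \<le> F p + \<nu> * (a p - 1)"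
proof -
  obtain s where s: "\<forall>c\<in>{0<..}. perturbation 1 + s * (c - 1) \<le> perturbation c"
    using convex_on_supporting_line[OF convex_on_perturbation, of "1/2" 1 2] by auto
  have "perturbation 1 \<le> F p + (- s) * (a p - 1)" if "p \<in> D" for p
    using s constraint_pos[OF that] perturbation_le[OF that] by force
  then show ?thesis
    by blast
qed

end

definition comb_P :: "real \<Rightarrow> real vec \<times> real \<Rightarrow> real vec \<times> real \<Rightarrow> real vec \<times> real" where
  "comb_P t p q = (t \<cdot>\<^sub>v fst p + (1 - t) \<cdot>\<^sub>v fst q, t * snd p + (1 - t) * snd q)"

definition constraint_P :: "nat \<Rightarrow> real \<Rightarrow> real \<Rightarrow> real vec \<times> real \<Rightarrow> real" where
  "constraint_P N se2 sep2 p = se2 * (\<Sum>i<N. fst p $ i) + sep2 * snd p"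

lemma feas_P_eq_level: "feas_P N se2 sep2 = {p \<in> dom_P N. constraint_P N se2 sep2 p = 1}"
  unfolding feas_P_def constraint_P_def by auto

lemma dom_P_sum_nonneg: "p \<in> dom_P N \<Longrightarrow> 0 \<le> (\<Sum>i<N. fst p $ i)"
  unfolding dom_P_def by (auto intro: sum_nonneg)

lemma convex_perturbation_P:
  assumes "R \<le> N" and lam: "\<And>j. j < R \<Longrightarrow> 0 \<le> lam j" and "0 < se2" "0 < sep2"
  shows "convex_perturbation (dom_P N) comb_P (\<lambda>p. Phi M R yt lam (fst p) (snd p)) (constraint_P N se2 sep2)"
proof
  fix p q and t :: real
  assume p: "p \<in> dom_P N" and q: "q \<in> dom_P N" and t: "0 \<le> t" "t \<le> 1"
  have "0 < t * snd p + (1 - t) * snd q"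
    using p q t unfolding dom_P_def by (cases "t = 0") (auto intro: add_pos_nonneg)
  then show "comb_P t p q \<in> dom_P N"
    using p q t unfolding comb_P_def dom_P_def by auto
  have sum_comb: "(\<Sum>i<N. (t \<cdot>\<^sub>v fst p + (1 - t) \<cdot>\<^sub>v fst q) $ i)
      = t * (\<Sum>i<N. fst p $ i) + (1 - t) * (\<Sum>i<N. fst q $ i)"
    using p q unfolding dom_P_def by (auto simp: sum.distrib sum_distrib_left)
  show "constraint_P N se2 sep2 (comb_P t p q)
      = t * constraint_P N se2 sep2 p + (1 - t) * constraint_P N se2 sep2 q"
    unfolding constraint_P_def comb_P_def fst_conv snd_conv sum_comb by (simp add: algebra_simps)
  show "Phi M R yt lam (fst (comb_P t p q)) (snd (comb_P t p q))
      \<le> t * Phi M R yt lam (fst p) (snd p) + (1 - t) * Phi M R yt lam (fst q) (snd q)"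
    unfolding comb_P_def using Phi_convex[OF assms(1) lam p q t] by simp
next
  fix p assume "p \<in> dom_P N"
  then show "0 < constraint_P N se2 sep2 p"
    using assms(3,4) dom_P_sum_nonneg unfolding dom_P_def constraint_P_def
    by (auto intro!: add_nonneg_pos)
next
  fix c :: real assume "0 < c"
  then have "(0\<^sub>v N, c / sep2) \<in> dom_P N" and "constraint_P N se2 sep2 (0\<^sub>v N, c / sep2) = c"
    using assms(4) unfolding dom_P_def constraint_P_def by auto
  then show "\<exists>p\<in>dom_P N. constraint_P N se2 sep2 p = c"
    by blast
  have "- real M / 2 * ln (c / sep2) \<le> Phi M R yt lam (fst p) (snd p)"
    if "p \<in> dom_P N" "constraint_P N se2 sep2 p = c" for p
  proof -
    have "0 \<le> se2 * (\<Sum>i<N. fst p $ i)" "0 < snd p"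
      using that(1) assms(3) dom_P_sum_nonneg unfolding dom_P_def by auto
    moreover have "snd p \<le> c / sep2"
      using calculation that(2) assms(4) unfolding constraint_P_def by (simp add: field_simps)
    ultimately have "ln (snd p) \<le> ln (c / sep2)"
      by (intro ln_mono) auto
    then have "- real M / 2 * ln (c / sep2) \<le> - real M / 2 * ln (snd p)"
      by (simp add: mult_left_mono)
    also have "\<dots> \<le> Phi M R yt lam (fst p) (snd p)"
      using Phi_ge_neg_ln[OF assms(1)] that(1) by (metis prod.collapse)
    finally show ?thesis .
  qed
  then show "bdd_below
      ((\<lambda>p. Phi M R yt lam (fst p) (snd p)) ` {p \<in> dom_P N. constraint_P N se2 sep2 p = c})"
    by (intro bdd_belowI[of _ "- real M / 2 * ln (c / sep2)"]) blast
qed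

lemma dual_val_le_primal_val: "dual_val M N R se2 sep2 yt lam \<le> primal_val M N R se2 sep2 yt lam"
  unfolding dual_val_def primal_val_def
proof (intro SUP_least INF_greatest)
  fix d :: "real \<times> real vec" and p :: "real vec \<times> real"
  assume d: "d \<in> {(nu, mu). mu \<in> carrier_vec N \<and> (\<forall>i<N. 0 \<le> mu $ i)}" and p: "p \<in> feas_P N se2 sep2"
  then have "0 \<le> (\<Sum>i<N. snd d $ i * fst p $ i)"
    unfolding feas_P_def dom_P_def by (auto intro!: sum_nonneg)
  then have "lagr_P M N R se2 sep2 yt lam (fst p) (snd p) (fst d) (snd d) \<le> Phi M R yt lam (fst p) (snd p)"
    using p unfolding lagr_P_def feas_P_def by auto
  then show "dual_fun M N R se2 sep2 yt lam (fst d) (snd d) \<le> ereal (Phi M R yt lam (fst p) (snd p))"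
    unfolding dual_fun_def using p unfolding feas_P_def by (intro INF_lower2[of p]) auto
qed

lemma primal_val_le_dual_val:
  assumes "R \<le> N" and "\<And>j. j < R \<Longrightarrow> 0 \<le> lam j" and "0 < se2" "0 < sep2"
  shows "primal_val M N R se2 sep2 yt lam \<le> dual_val M N R se2 sep2 yt lam"
proof -
  interpret P: convex_perturbation
      "dom_P N" comb_P "\<lambda>p. Phi M R yt lam (fst p) (snd p)" "constraint_P N se2 sep2"
    using convex_perturbation_P[OF assms] .
  obtain \<nu> where \<nu>: "\<And>p. p \<in> dom_P N \<Longrightarrow>
      P.perturbation 1 \<le> Phi M R yt lam (fst p) (snd p) + \<nu> * (constraint_P N se2 sep2 p - 1)"
    using P.lagrange_multiplier by blast
  have "primal_val M N R se2 sep2 yt lam = ereal (P.perturbation 1)"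
    unfolding primal_val_def P.perturbation_def feas_P_eq_level
    using P.level_bdd_below[of 1] P.level_nonempty[of 1] by (subst ereal_Inf') (auto simp: image_comp)
  also have "\<dots> \<le> dual_fun M N R se2 sep2 yt lam \<nu> (0\<^sub>v N)"
    unfolding dual_fun_def lagr_P_def using \<nu> by (intro INF_greatest) (auto simp: constraint_P_def)
  also have "\<dots> \<le> dual_val M N R se2 sep2 yt lam"
    unfolding dual_val_def by (rule SUP_upper2[of "(\<nu>, 0\<^sub>v N)"]) auto
  finally show ?thesis .
qed

theorem mainTheorem3:
  fixes M N R :: nat and y :: "real vec" and H U V :: "real mat"
    and lam :: "nat \<Rightarrow> real" and se2 sep2 :: real
  assumes "M \<ge> 1" and "N \<ge> 1"
    and "y \<in> carrier_vec M" and "H \<in> carrier_mat M N"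
    and "R = vec_space.rank M H" and "R \<ge> 1"
    and "se2 > 0" and "sep2 > 0"
    and "is_svd M N H U V R lam"
  defines "yt \<equiv> transpose_mat U *\<^sub>v y"
  shows "(\<forall>p\<in>dom_P N. \<forall>q\<in>dom_P N. \<forall>t::real. 0 \<le> t \<and> t \<le> 1 \<longrightarrow>
            Phi M R yt lam (t \<cdot>\<^sub>v fst p + (1 - t) \<cdot>\<^sub>v fst q) (t * snd p + (1 - t) * snd q)
            \<le> t * Phi M R yt lam (fst p) (snd p) + (1 - t) * Phi M R yt lam (fst q) (snd q))
       \<and> (INF x\<in>carrier_vec N. ereal (nll M y H se2 sep2 x)) = primal_val M N R se2 sep2 yt lam
       \<and> primal_val M N R se2 sep2 yt lam = dual_val M N R se2 sep2 yt lam"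
proof -
  have lam: "\<And>j. j < R \<Longrightarrow> 0 \<le> lam j"
    using assms(9) unfolding is_svd_def by (auto intro: less_imp_le)
  have "R \<le> M" "R \<le> N"
    using vec_space.rank_le_nr[OF assms(4)] vec_space.rank_le_nc[OF assms(4)] assms(5) by auto
  then show ?thesis
    using Phi_convex[OF \<open>R \<le> N\<close> lam]
      INF_nll_eq_primal_val[OF assms(9) \<open>R \<le> M\<close> \<open>R \<le> N\<close> assms(7,8,3)]
      primal_val_le_dual_val[OF \<open>R \<le> N\<close> lam assms(7,8)] dual_val_le_primal_val
    unfolding yt_def by (auto intro: antisym)
qed

end
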